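(* Let $X$ be a compact metric space, $f:X\dashrightarrow X$ a continuous open-dense defined map and $0\ne\mu_0\in SM^+(X)$. 1) If $\mu$ is a weak cluster point of the Cesàro averages $\mu_n=\frac1n\sum_{j=0}^n(f_* )^j(\mu_0)$, then $f_*(\mu)\ge\mu$. 2) If $f_*(\mu_0)\le\mu_0$, then $(f_* )^n(\mu_0)$ converges weakly to some $\mu_\infty\in SM^+(X)$, and $\mu_\infty$ is the largest element of the (non-empty) set $\{\mu\in SM^+(X):\mu\le\mu_0,\ f_*(\mu)=\mu\}$. 3) If $f_*(\mu_0)\ge\mu_0$, then the set $\{\mu\in SM^+(X):\mu\ge\mu_0,\ f_*(\mu)=\mu\}$ is non-empty and has a smallest element.
   Context: Positive strong submeasure on $X$: a map $\mu:C^0(X)\to\mathbb{R}$ that is sub-linear ($\mu(\varphi_1+\varphi_2)\le\mu(\varphi_1)+\mu(\varphi_2)$, $\mu(\lambda\varphi)=\lambda\mu(\varphi)$ for $\lambda\ge0$), bounded ($|\mu(\varphi)|\le C\|\varphi\|_{L^\infty}$) and non-decreasing; $SM^+(X)$ is the set of these. $\mu\le\nu$ means $\mu(\varphi)\le\nu(\varphi)$ for all $\varphi$. Weak convergence: uniformly bounded norms and pointwise convergence on $C^0(X)$. A continuous open-dense defined map $f:X\dashrightarrow X$ is a continuous map $f:\mathrm{OpenDom}(f)\to X$ with $\mathrm{OpenDom}(f)$ open dense in $X$. For $\varphi\in C^0(X)$, $f^*(\varphi):=E(\varphi\circ f)$ where for bounded $g$ on an open dense $U$, $E(g)=g$ on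 $U$ and $E(g)(x)=\limsup_{y\in U,y\to x}g(y)$ off $U$. Pushforward: $f_*(\mu)(\varphi):=\inf\{\mu(\psi):\psi\in C^0(X),\ \psi\ge f^*(\varphi)\}$; $(f_* )^j$ denotes the $j$-fold iterate of the operator $f_*$. *)

theory Defs
  imports "HOL-Analysis.Analysis"
begin

text \<open>Continuous real functions on the compact set X, normalised to be 0 outside X
  (so that each element of C^0(X) has exactly one representative).\<close>
definition C0 :: "'a::metric_space set \<Rightarrow> ('a \<Rightarrow> real) set" where
  "C0 X = {\<phi>. continuous_on X \<phi> \<and> (\<forall>x. x \<notin> X \<longrightarrow> \<phi> x = 0)}"

definition supnorm :: "'a set \<Rightarrow> ('a \<Rightarrow> real) \<Rightarrow> real" where
  "supnorm X \<phi> = (SUP x\<in>X. \<bar>\<phi> x\<bar>)"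

definition SMp :: "'a::metric_space set \<Rightarrow> (('a \<Rightarrow> real) \<Rightarrow> real) set" where
  "SMp X = {\<mu>.
     (\<forall>\<phi>1\<in>C0 X. \<forall>\<phi>2\<in>C0 X. \<mu> (\<lambda>x. \<phi>1 x + \<phi>2 x) \<le> \<mu> \<phi>1 + \<mu> \<phi>2) \<and>
     (\<forall>\<phi>\<in>C0 X. \<forall>c::real. c \<ge> 0 \<longrightarrow> \<mu> (\<lambda>x. c * \<phi> x) = c * \<mu> \<phi>) \<and>
     (\<exists>C. \<forall>\<phi>\<in>C0 X. \<bar>\<mu> \<phi>\<bar> \<le> C * supnorm X \<phi>) \<and>
     (\<forall>\<phi>1\<in>C0 X. \<forall>\<phi>2\<in>C0 X. (\<forall>x\<in>X. \<phi>1 x \<le> \<phi>2 x) \<longrightarrow> \<mu> \<phi>1 \<le> \<mu> \<phi>2)}"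

definition sm_le :: "'a::metric_space set \<Rightarrow> (('a \<Rightarrow> real) \<Rightarrow> real) \<Rightarrow> (('a \<Rightarrow> real) \<Rightarrow> real) \<Rightarrow> bool" where
  "sm_le X \<mu> \<nu> \<longleftrightarrow> (\<forall>\<phi>\<in>C0 X. \<mu> \<phi> \<le> \<nu> \<phi>)"

definition sm_eq :: "'a::metric_space set \<Rightarrow> (('a \<Rightarrow> real) \<Rightarrow> real) \<Rightarrow> (('a \<Rightarrow> real) \<Rightarrow> real) \<Rightarrow> bool" where
  "sm_eq X \<mu> \<nu> \<longleftrightarrow> (\<forall>\<phi>\<in>C0 X. \<mu> \<phi> = \<nu> \<phi>)"

definition weak_conv :: "'a::metric_space set \<Rightarrow> (nat \<Rightarrow> ('a \<Rightarrow> real) \<Rightarrow> real) \<Rightarrow> (('a \<Rightarrow> real) \<Rightarrow> real) \<Rightarrow> bool" where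
  "weak_conv X \<mu>s \<mu> \<longleftrightarrow>
     (\<exists>C. \<forall>n. \<forall>\<phi>\<in>C0 X. \<bar>\<mu>s n \<phi>\<bar> \<le> C * supnorm X \<phi>) \<and>
     (\<forall>\<phi>\<in>C0 X. (\<lambda>n. \<mu>s n \<phi>) \<longlonglongrightarrow> \<mu> \<phi>)"

definition weak_cluster_point :: "'a::metric_space set \<Rightarrow> (nat \<Rightarrow> ('a \<Rightarrow> real) \<Rightarrow> real) \<Rightarrow> (('a \<Rightarrow> real) \<Rightarrow> real) \<Rightarrow> bool" where
  "weak_cluster_point X \<mu>s \<mu> \<longleftrightarrow> (\<exists>r. strict_mono r \<and> weak_conv X (\<mu>s \<circ> r) \<mu>)"

definition open_dense_map :: "'a::metric_space set \<Rightarrow> 'a set \<Rightarrow> ('a \<Rightarrow> 'a) \<Rightarrow> bool" where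
  "open_dense_map X U f \<longleftrightarrow> U \<subseteq> X \<and> openin (top_of_set X) U \<and> X \<subseteq> closure U
     \<and> continuous_on U f \<and> f ` U \<subseteq> X"

definition ext_E :: "'a::metric_space set \<Rightarrow> 'a set \<Rightarrow> ('a \<Rightarrow> real) \<Rightarrow> 'a \<Rightarrow> real" where
  "ext_E X U g x = (if x \<in> U then g x
      else if x \<in> X then real_of_ereal (Limsup (at x within U) (\<lambda>y. ereal (g y)))
      else 0)"

definition pullback :: "'a::metric_space set \<Rightarrow> 'a set \<Rightarrow> ('a \<Rightarrow> 'a) \<Rightarrow> ('a \<Rightarrow> real) \<Rightarrow> 'a \<Rightarrow> real" where
  "pullback X U f \<phi> = ext_E X U (\<lambda>y. \<phi> (f y))"

definition pushforward :: "'a::metric_space set \<Rightarrow> 'a set \<Rightarrow> ('a \<Rightarrow> 'a)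
     \<Rightarrow> (('a \<Rightarrow> real) \<Rightarrow> real) \<Rightarrow> ('a \<Rightarrow> real) \<Rightarrow> real" where
  "pushforward X U f \<mu> \<phi> =
     Inf {\<mu> \<psi> | \<psi>. \<psi> \<in> C0 X \<and> (\<forall>x\<in>X. \<psi> x \<ge> pullback X U f \<phi> x)}"

end

theory Submission
  imports Defs
begin

text \<open>The pushforward is an infimum over continuous majorants: f_*\<mu>(\<phi>) = inf {\<mu>(\<psi>) : \<psi> \<ge> \<phi>\<circ>f on U},
  because a continuous \<psi> dominates the upper semicontinuous extension E(\<phi>\<circ>f) exactly when it
  dominates \<phi>\<circ>f on the dense set U. Hence f_* is a monotone self-map of SM^+(X) that does not
  increase the mass \<mu>(1), and all iterates are uniformly bounded.
  (1) Since f_*((f_*)^j\<mu>0)(\<phi>) \<le> (f_*)^j\<mu>0(\<psi>) for every majorant \<psi>, the Cesaro sums at \<phi> and at \<psi>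
  differ by a bounded telescoping term, so a cluster point \<mu> satisfies \<mu>(\<phi>) \<le> \<mu>(\<psi>), i.e. \<mu> \<le> f_*\<mu>.
  (2) If f_*\<mu>0 \<le> \<mu>0 the iterates decrease pointwise and are bounded below, so they converge; the limit
  is fixed, and every subinvariant \<nu> \<le> \<mu>0 stays below all iterates, hence below the limit.
  (3) Applying (2) to c\<cdot>max(0, sup \<phi>) shows that fixed points above \<mu>0 exist, and applying it to the
  infimal convolution of two of them shows that they form a downward directed family. The pointwise
  infimum of a directed family of submeasures is again a submeasure: the least fixed point.\<close>

lemma C0_add: "\<phi>1 \<in> C0 X \<Longrightarrow> \<phi>2 \<in> C0 X \<Longrightarrow> (\<lambda>x. \<phi>1 x + \<phi>2 x) \<in> C0 X"
  unfolding C0_def by (auto intro: continuous_intros)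

lemma C0_diff: "\<phi>1 \<in> C0 X \<Longrightarrow> \<phi>2 \<in> C0 X \<Longrightarrow> (\<lambda>x. \<phi>1 x - \<phi>2 x) \<in> C0 X"
  unfolding C0_def by (auto intro: continuous_intros)

lemma C0_scale: "\<phi> \<in> C0 X \<Longrightarrow> (\<lambda>x. c * \<phi> x) \<in> C0 X"
  unfolding C0_def by (auto intro: continuous_intros)

lemma C0_zero: "(\<lambda>x. 0) \<in> C0 X"
  unfolding C0_def by auto

definition const_on :: "'a set \<Rightarrow> real \<Rightarrow> 'a \<Rightarrow> real" where
  "const_on X c x = (if x \<in> X then c else 0)"

lemma C0_const_on: "const_on X c \<in> C0 X"
  unfolding C0_def const_on_def by (auto intro: continuous_on_eq[OF continuous_on_const])

lemma SMp_add_le: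
  "\<nu> \<in> SMp X \<Longrightarrow> \<phi>1 \<in> C0 X \<Longrightarrow> \<phi>2 \<in> C0 X \<Longrightarrow> \<nu> (\<lambda>x. \<phi>1 x + \<phi>2 x) \<le> \<nu> \<phi>1 + \<nu> \<phi>2"
  unfolding SMp_def by blast

lemma SMp_scale: "\<nu> \<in> SMp X \<Longrightarrow> \<phi> \<in> C0 X \<Longrightarrow> c \<ge> 0 \<Longrightarrow> \<nu> (\<lambda>x. c * \<phi> x) = c * \<nu> \<phi>"
  unfolding SMp_def by blast

lemma SMp_mono:
  "\<nu> \<in> SMp X \<Longrightarrow> \<phi>1 \<in> C0 X \<Longrightarrow> \<phi>2 \<in> C0 X \<Longrightarrow> (\<And>x. x \<in> X \<Longrightarrow> \<phi>1 x \<le> \<phi>2 x) \<Longrightarrow> \<nu> \<phi>1 \<le> \<nu> \<phi>2"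
  unfolding SMp_def by blast

lemma SMp_zero: "\<nu> \<in> SMp X \<Longrightarrow> \<nu> (\<lambda>x. 0) = 0"
  using SMp_scale[of \<nu> X "\<lambda>x. 0" 0] C0_zero[of X] by simp

lemma sm_le_trans: "sm_le X \<mu> \<nu> \<Longrightarrow> sm_le X \<nu> \<rho> \<Longrightarrow> sm_le X \<mu> \<rho>"
  unfolding sm_le_def by (meson order_trans)

lemma SMp_weak_limit:
  assumes "\<And>n. \<mu>s n \<in> SMp X" and "weak_conv X \<mu>s \<mu>"
  shows "\<mu> \<in> SMp X"
proof -
  obtain C where bound: "\<And>n \<phi>. \<phi> \<in> C0 X \<Longrightarrow> \<bar>\<mu>s n \<phi>\<bar> \<le> C * supnorm X \<phi>"
    and lim: "\<And>\<phi>. \<phi> \<in> C0 X \<Longrightarrow> (\<lambda>n. \<mu>s n \<phi>) \<longlonglongrightarrow> \<mu> \<phi>"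
    using assms(2) unfolding weak_conv_def by blast
  have "\<mu> (\<lambda>x. \<phi>1 x + \<phi>2 x) \<le> \<mu> \<phi>1 + \<mu> \<phi>2" if "\<phi>1 \<in> C0 X" "\<phi>2 \<in> C0 X" for \<phi>1 \<phi>2
    using SMp_add_le[OF assms(1) that]
    by (intro LIMSEQ_le[OF lim[OF C0_add[OF that]] tendsto_add[OF lim lim]]) (auto simp: that)
  moreover have "\<mu> (\<lambda>x. c * \<phi> x) = c * \<mu> \<phi>" if "\<phi> \<in> C0 X" "c \<ge> 0" for \<phi> c
  proof (rule LIMSEQ_unique)
    show "(\<lambda>n. \<mu>s n (\<lambda>x. c * \<phi> x)) \<longlonglongrightarrow> \<mu> (\<lambda>x. c * \<phi> x)"
      by (rule lim[OF C0_scale[OF that(1)]])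
    show "(\<lambda>n. \<mu>s n (\<lambda>x. c * \<phi> x)) \<longlonglongrightarrow> c * \<mu> \<phi>"
      unfolding SMp_scale[OF assms(1) that] by (intro tendsto_mult_left lim that(1))
  qed
  moreover have "\<bar>\<mu> \<phi>\<bar> \<le> C * supnorm X \<phi>" if "\<phi> \<in> C0 X" for \<phi>
    using bound[OF that] by (intro LIMSEQ_le_const2[OF tendsto_rabs[OF lim[OF that]]]) auto
  moreover have "\<mu> \<phi>1 \<le> \<mu> \<phi>2" if "\<phi>1 \<in> C0 X" "\<phi>2 \<in> C0 X" "\<forall>x\<in>X. \<phi>1 x \<le> \<phi>2 x" for \<phi>1 \<phi>2
    using SMp_mono[OF assms(1) that(1,2)] that(3)
    by (intro LIMSEQ_le[OF lim[OF that(1)] lim[OF that(2)]]) auto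
  ultimately show ?thesis
    unfolding SMp_def by blast
qed

locale nonempty_compact =
  fixes X :: "'a::metric_space set"
  assumes compact: "compact X" and nonempty: "X \<noteq> {}"
begin

lemma C0_bounded:
  assumes "\<phi> \<in> C0 X"
  obtains B where "\<And>x. x \<in> X \<Longrightarrow> \<bar>\<phi> x\<bar> \<le> B"
proof -
  have "compact (\<phi> ` X)"
    using assms compact unfolding C0_def by (auto intro: compact_continuous_image)
  then obtain B where "\<forall>y\<in>\<phi> ` X. norm y \<le> B"
    using compact_imp_bounded bounded_iff by metis
  then show ?thesis
    using that by auto
qed

lemma abs_le_supnorm: "\<phi> \<in> C0 X \<Longrightarrow> x \<in> X \<Longrightarrow> \<bar>\<phi> x\<bar> \<le> supnorm X \<phi>"
  unfolding supnorm_def by (rule cSUP_upper, assumption) (metis C0_bounded bdd_aboveI2)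

lemma supnorm_nonneg: "\<phi> \<in> C0 X \<Longrightarrow> 0 \<le> supnorm X \<phi>"
  using nonempty abs_le_supnorm by (meson abs_ge_zero ex_in_conv order_trans)

lemma supnorm_zero: "supnorm X (\<lambda>x. 0) = 0"
  unfolding supnorm_def using nonempty by simp

lemma le_SUP_C0: "\<phi> \<in> C0 X \<Longrightarrow> x \<in> X \<Longrightarrow> \<phi> x \<le> (SUP x\<in>X. \<phi> x)"
  by (rule cSUP_upper, assumption) (metis C0_bounded abs_le_D1 bdd_aboveI2)

lemma SUP_le: "(\<And>x. x \<in> X \<Longrightarrow> \<phi> x \<le> M) \<Longrightarrow> (SUP x\<in>X. \<phi> x) \<le> (M::real)"
  using nonempty by (rule cSUP_least)

text \<open>Homogeneity need only be checked as an inequality for c > 0: applying it to 1/c gives the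
  reverse inequality, and the bound forces \<nu>(0) = 0.\<close>

lemma SMp_intro:
  assumes "\<And>\<phi>1 \<phi>2. \<phi>1 \<in> C0 X \<Longrightarrow> \<phi>2 \<in> C0 X \<Longrightarrow> \<nu> (\<lambda>x. \<phi>1 x + \<phi>2 x) \<le> \<nu> \<phi>1 + \<nu> \<phi>2"
    and scale: "\<And>\<phi> c. \<phi> \<in> C0 X \<Longrightarrow> c > 0 \<Longrightarrow> \<nu> (\<lambda>x. c * \<phi> x) \<le> c * \<nu> \<phi>"
    and bound: "\<And>\<phi>. \<phi> \<in> C0 X \<Longrightarrow> \<bar>\<nu> \<phi>\<bar> \<le> C * supnorm X \<phi>"
    and "\<And>\<phi>1 \<phi>2. \<phi>1 \<in> C0 X \<Longrightarrow> \<phi>2 \<in> C0 X \<Longrightarrow> \<forall>x\<in>X. \<phi>1 x \<le> \<phi>2 x \<Longrightarrow> \<nu> \<phi>1 \<le> \<nu> \<phi>2"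
  shows "\<nu> \<in> SMp X"
proof -
  have "\<nu> (\<lambda>x. c * \<phi> x) = c * \<nu> \<phi>" if "\<phi> \<in> C0 X" "c > 0" for \<phi> c
  proof (rule antisym)
    have "\<nu> \<phi> = \<nu> (\<lambda>x. (1 / c) * (c * \<phi> x))"
      using that by simp
    also have "\<dots> \<le> (1 / c) * \<nu> (\<lambda>x. c * \<phi> x)"
      using that by (intro scale C0_scale) auto
    finally show "c * \<nu> \<phi> \<le> \<nu> (\<lambda>x. c * \<phi> x)"
      using that by (simp add: field_simps)
  qed (use that scale in auto)
  moreover have "\<nu> (\<lambda>x. 0) = 0"
    using bound[OF C0_zero] supnorm_zero by simp
  ultimately have "\<nu> (\<lambda>x. c * \<phi> x) = c * \<nu> \<phi>" if "\<phi> \<in> C0 X" "c \<ge> 0" for \<phi> c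
    using that by (cases "c = 0") auto
  then show ?thesis
    unfolding SMp_def using assms(1,3,4) by blast
qed

lemma SMp_const_on: "\<nu> \<in> SMp X \<Longrightarrow> c \<ge> 0 \<Longrightarrow> \<nu> (const_on X c) = c * \<nu> (const_on X 1)"
proof -
  have "const_on X c = (\<lambda>x. c * const_on X 1 x)"
    by (auto simp: const_on_def)
  then show "\<nu> \<in> SMp X \<Longrightarrow> c \<ge> 0 \<Longrightarrow> ?thesis"
    using SMp_scale[OF _ C0_const_on] by metis
qed

lemma SMp_const_on_one_nonneg: "\<nu> \<in> SMp X \<Longrightarrow> 0 \<le> \<nu> (const_on X 1)"
  using SMp_mono[OF _ C0_zero C0_const_on, of \<nu> X 1] SMp_zero by (force simp: const_on_def)

lemma SMp_le_const_on:
  assumes "\<nu> \<in> SMp X" "\<psi> \<in> C0 X" "c \<ge> 0" "\<forall>x\<in>X. \<psi> x \<le> c"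
  shows "\<nu> \<psi> \<le> c * \<nu> (const_on X 1)"
  using SMp_mono[OF assms(1,2) C0_const_on, of c] assms SMp_const_on
  by (simp add: const_on_def)

text \<open>The lower bound comes from sublinearity: \<nu>(-c) \<ge> -\<nu>(c).\<close>

lemma SMp_ge_const_on:
  assumes "\<nu> \<in> SMp X" "\<psi> \<in> C0 X" "c \<ge> 0" "\<forall>x\<in>X. -c \<le> \<psi> x"
  shows "- c * \<nu> (const_on X 1) \<le> \<nu> \<psi>"
proof -
  have "(\<lambda>x. const_on X c x + const_on X (-c) x) = (\<lambda>x. 0)"
    by (auto simp: const_on_def)
  then have "0 = \<nu> (\<lambda>x. const_on X c x + const_on X (-c) x)"
    using SMp_zero[OF assms(1)] by simp
  also have "\<dots> \<le> c * \<nu> (const_on X 1) + \<nu> (const_on X (-c))"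
    using SMp_add_le[OF assms(1) C0_const_on C0_const_on, of c "-c"] SMp_const_on[OF assms(1,3)]
    by simp
  also have "\<nu> (const_on X (-c)) \<le> \<nu> \<psi>"
    using SMp_mono[OF assms(1) C0_const_on assms(2)] assms(4) by (simp add: const_on_def)
  finally show ?thesis by simp
qed

lemma SMp_abs_le: "\<nu> \<in> SMp X \<Longrightarrow> \<phi> \<in> C0 X \<Longrightarrow> \<bar>\<nu> \<phi>\<bar> \<le> \<nu> (const_on X 1) * supnorm X \<phi>"
  using SMp_le_const_on[of \<nu> \<phi> "supnorm X \<phi>"] SMp_ge_const_on[of \<nu> \<phi> "supnorm X \<phi>"]
    abs_le_supnorm supnorm_nonneg
  by (fastforce simp: abs_le_iff mult.commute)

lemma abs_le_between_SMp:
  assumes "\<mu> \<in> SMp X" "\<nu> \<in> SMp X" "\<phi> \<in> C0 X" "\<mu> \<phi> \<le> a" "a \<le> \<nu> \<phi>"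
  shows "\<bar>a\<bar> \<le> (\<mu> (const_on X 1) + \<nu> (const_on X 1)) * supnorm X \<phi>"
proof -
  have "0 \<le> \<mu> (const_on X 1) * supnorm X \<phi>" "0 \<le> \<nu> (const_on X 1) * supnorm X \<phi>"
    using SMp_const_on_one_nonneg assms(1,2) supnorm_nonneg[OF assms(3)] by simp_all
  then show ?thesis
    using SMp_abs_le[OF assms(1,3)] SMp_abs_le[OF assms(2,3)] assms(4,5)
    by (simp add: abs_le_iff distrib_right)
qed

end

definition sup_submeasure :: "'a set \<Rightarrow> real \<Rightarrow> ('a \<Rightarrow> real) \<Rightarrow> real" where
  "sup_submeasure X c \<phi> = c * max 0 (SUP x\<in>X. \<phi> x)"

context nonempty_compact
begin

lemma sup_submeasure_SMp:
  assumes "c \<ge> 0"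
  shows "sup_submeasure X c \<in> SMp X"
proof (rule SMp_intro[where C = c])
  fix \<phi>1 \<phi>2 assume "\<phi>1 \<in> C0 X" "\<phi>2 \<in> C0 X"
  then have "(SUP x\<in>X. \<phi>1 x + \<phi>2 x) \<le> (SUP x\<in>X. \<phi>1 x) + (SUP x\<in>X. \<phi>2 x)"
    by (intro SUP_le add_mono le_SUP_C0)
  then have "max 0 (SUP x\<in>X. \<phi>1 x + \<phi>2 x) \<le> max 0 (SUP x\<in>X. \<phi>1 x) + max 0 (SUP x\<in>X. \<phi>2 x)"
    by (auto simp: max_def)
  then show "sup_submeasure X c (\<lambda>x. \<phi>1 x + \<phi>2 x) \<le> sup_submeasure X c \<phi>1 + sup_submeasure X c \<phi>2"
    unfolding sup_submeasure_def distrib_left[symmetric] using assms by (rule mult_left_mono)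
next
  fix \<phi> and t :: real assume "\<phi> \<in> C0 X" "t > 0"
  then have "(SUP x\<in>X. t * \<phi> x) \<le> t * (SUP x\<in>X. \<phi> x)"
    by (intro SUP_le) (simp add: le_SUP_C0)
  moreover have "t * max 0 (SUP x\<in>X. \<phi> x) = max 0 (t * (SUP x\<in>X. \<phi> x))"
    using \<open>t > 0\<close> by (simp add: max_def zero_le_mult_iff)
  ultimately have "max 0 (SUP x\<in>X. t * \<phi> x) \<le> t * max 0 (SUP x\<in>X. \<phi> x)"
    by linarith
  then show "sup_submeasure X c (\<lambda>x. t * \<phi> x) \<le> t * sup_submeasure X c \<phi>"
    unfolding sup_submeasure_def using assms by (simp add: mult_left_mono mult.left_commute)
next
  fix \<phi> assume "\<phi> \<in> C0 X"
  then have "max 0 (SUP x\<in>X. \<phi> x) \<le> supnorm X \<phi>"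
    using abs_le_supnorm supnorm_nonneg by (force intro: SUP_le)
  then show "\<bar>sup_submeasure X c \<phi>\<bar> \<le> c * supnorm X \<phi>"
    unfolding sup_submeasure_def using assms by (simp add: abs_mult mult_left_mono)
next
  fix \<phi>1 \<phi>2 assume "\<phi>1 \<in> C0 X" "\<phi>2 \<in> C0 X" "\<forall>x\<in>X. \<phi>1 x \<le> \<phi>2 x"
  then have "(SUP x\<in>X. \<phi>1 x) \<le> (SUP x\<in>X. \<phi>2 x)"
    by (intro SUP_le) (meson le_SUP_C0 order_trans)
  then show "sup_submeasure X c \<phi>1 \<le> sup_submeasure X c \<phi>2"
    unfolding sup_submeasure_def using assms by (simp add: mult_left_mono)
qed

lemma SMp_le_sup_submeasure: "\<nu> \<in> SMp X \<Longrightarrow> sm_le X \<nu> (sup_submeasure X (\<nu> (const_on X 1)))"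
proof (unfold sm_le_def sup_submeasure_def, intro ballI)
  fix \<phi> assume "\<nu> \<in> SMp X" "\<phi> \<in> C0 X"
  then have "\<nu> \<phi> \<le> max 0 (SUP x\<in>X. \<phi> x) * \<nu> (const_on X 1)"
    using le_SUP_C0 by (intro SMp_le_const_on) (auto intro: max.coboundedI2)
  then show "\<nu> \<phi> \<le> \<nu> (const_on X 1) * max 0 (SUP x\<in>X. \<phi> x)"
    by (simp add: mult.commute)
qed

end

definition inf_conv :: "'a::metric_space set \<Rightarrow> (('a \<Rightarrow> real) \<Rightarrow> real) \<Rightarrow> (('a \<Rightarrow> real) \<Rightarrow> real)
    \<Rightarrow> ('a \<Rightarrow> real) \<Rightarrow> real" where
  "inf_conv X \<nu>1 \<nu>2 \<phi> = (INF \<phi>1\<in>C0 X. \<nu>1 \<phi>1 + \<nu>2 (\<lambda>x. \<phi> x - \<phi>1 x))"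

lemma SMp_le_split:
  assumes "\<mu> \<in> SMp X" "sm_le X \<mu> \<nu>1" "sm_le X \<mu> \<nu>2" "\<phi> \<in> C0 X" "\<phi>1 \<in> C0 X"
  shows "\<mu> \<phi> \<le> \<nu>1 \<phi>1 + \<nu>2 (\<lambda>x. \<phi> x - \<phi>1 x)"
proof -
  have "\<mu> \<phi> = \<mu> (\<lambda>x. \<phi>1 x + (\<phi> x - \<phi>1 x))"
    by simp
  also have "\<dots> \<le> \<mu> \<phi>1 + \<mu> (\<lambda>x. \<phi> x - \<phi>1 x)"
    by (rule SMp_add_le[OF assms(1,5) C0_diff[OF assms(4,5)]])
  also have "\<dots> \<le> \<nu>1 \<phi>1 + \<nu>2 (\<lambda>x. \<phi> x - \<phi>1 x)"
    using assms C0_diff[OF assms(4,5)] unfolding sm_le_def by (intro add_mono) blast+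
  finally show ?thesis .
qed

lemma le_inf_conv:
  "(\<And>\<phi>1. \<phi>1 \<in> C0 X \<Longrightarrow> a \<le> \<nu>1 \<phi>1 + \<nu>2 (\<lambda>x. \<phi> x - \<phi>1 x)) \<Longrightarrow> a \<le> inf_conv X \<nu>1 \<nu>2 \<phi>"
  unfolding inf_conv_def using C0_zero by (intro cINF_greatest) auto

lemma sm_le_inf_conv:
  assumes "\<mu> \<in> SMp X" "sm_le X \<mu> \<nu>1" "sm_le X \<mu> \<nu>2"
  shows "sm_le X \<mu> (inf_conv X \<nu>1 \<nu>2)"
  unfolding sm_le_def using SMp_le_split[OF assms] by (blast intro: le_inf_conv)

context nonempty_compact
begin

context
  fixes \<mu> \<nu>1 \<nu>2
  assumes minorant: "\<mu> \<in> SMp X" "sm_le X \<mu> \<nu>1" "sm_le X \<mu> \<nu>2"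
    and SMp: "\<nu>1 \<in> SMp X" "\<nu>2 \<in> SMp X"
begin

lemma inf_conv_le:
  "\<phi> \<in> C0 X \<Longrightarrow> \<phi>1 \<in> C0 X \<Longrightarrow> inf_conv X \<nu>1 \<nu>2 \<phi> \<le> \<nu>1 \<phi>1 + \<nu>2 (\<lambda>x. \<phi> x - \<phi>1 x)"
  unfolding inf_conv_def
  by (rule cINF_lower[OF bdd_belowI2[where m = "\<mu> \<phi>"]]) (use SMp_le_split[OF minorant] in auto)

lemma inf_conv_le_left: "sm_le X (inf_conv X \<nu>1 \<nu>2) \<nu>1"
  unfolding sm_le_def using inf_conv_le SMp_zero[OF SMp(2)] by fastforce

lemma inf_conv_le_right: "sm_le X (inf_conv X \<nu>1 \<nu>2) \<nu>2"
  unfolding sm_le_def using inf_conv_le[OF _ C0_zero] SMp_zero[OF SMp(1)] by fastforce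

lemma inf_conv_add_le:
  assumes \<phi>: "\<phi> \<in> C0 X" "\<phi>' \<in> C0 X"
  shows "inf_conv X \<nu>1 \<nu>2 (\<lambda>x. \<phi> x + \<phi>' x) \<le> inf_conv X \<nu>1 \<nu>2 \<phi> + inf_conv X \<nu>1 \<nu>2 \<phi>'"
proof -
  have "inf_conv X \<nu>1 \<nu>2 (\<lambda>x. \<phi> x + \<phi>' x)
      \<le> (\<nu>1 \<phi>1 + \<nu>2 (\<lambda>x. \<phi> x - \<phi>1 x)) + (\<nu>1 \<phi>1' + \<nu>2 (\<lambda>x. \<phi>' x - \<phi>1' x))"
    if \<phi>1: "\<phi>1 \<in> C0 X" "\<phi>1' \<in> C0 X" for \<phi>1 \<phi>1'
  proof -
    have "inf_conv X \<nu>1 \<nu>2 (\<lambda>x. \<phi> x + \<phi>' x)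
        \<le> \<nu>1 (\<lambda>x. \<phi>1 x + \<phi>1' x) + \<nu>2 (\<lambda>x. (\<phi> x - \<phi>1 x) + (\<phi>' x - \<phi>1' x))"
      using inf_conv_le[OF C0_add[OF \<phi>] C0_add[OF \<phi>1]] by (simp add: algebra_simps)
    also have "\<dots> \<le> (\<nu>1 \<phi>1 + \<nu>1 \<phi>1') + (\<nu>2 (\<lambda>x. \<phi> x - \<phi>1 x) + \<nu>2 (\<lambda>x. \<phi>' x - \<phi>1' x))"
      using \<phi> \<phi>1 by (intro add_mono SMp_add_le[OF SMp(1)] SMp_add_le[OF SMp(2)] C0_diff)
    finally show ?thesis
      by simp
  qed
  then have "inf_conv X \<nu>1 \<nu>2 (\<lambda>x. \<phi> x + \<phi>' x) - (\<nu>1 \<phi>1' + \<nu>2 (\<lambda>x. \<phi>' x - \<phi>1' x))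
      \<le> inf_conv X \<nu>1 \<nu>2 \<phi>" if "\<phi>1' \<in> C0 X" for \<phi>1'
    using that by (intro le_inf_conv) (simp add: algebra_simps)
  then have "inf_conv X \<nu>1 \<nu>2 (\<lambda>x. \<phi> x + \<phi>' x) - inf_conv X \<nu>1 \<nu>2 \<phi> \<le> inf_conv X \<nu>1 \<nu>2 \<phi>'"
    by (intro le_inf_conv) (simp add: algebra_simps)
  then show ?thesis
    by simp
qed

lemma inf_conv_SMp: "inf_conv X \<nu>1 \<nu>2 \<in> SMp X"
proof (rule SMp_intro[where C = "\<mu> (const_on X 1) + \<nu>1 (const_on X 1)", OF inf_conv_add_le])
  fix \<phi> and t :: real assume "\<phi> \<in> C0 X" "t > 0"
  have "inf_conv X \<nu>1 \<nu>2 (\<lambda>x. t * \<phi> x) / t \<le> \<nu>1 \<phi>1 + \<nu>2 (\<lambda>x. \<phi> x - \<phi>1 x)"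
    if "\<phi>1 \<in> C0 X" for \<phi>1
  proof -
    have "inf_conv X \<nu>1 \<nu>2 (\<lambda>x. t * \<phi> x) \<le> \<nu>1 (\<lambda>x. t * \<phi>1 x) + \<nu>2 (\<lambda>x. t * (\<phi> x - \<phi>1 x))"
      using inf_conv_le[OF C0_scale[OF \<open>\<phi> \<in> C0 X\<close>] C0_scale[OF that]] by (simp add: algebra_simps)
    also have "\<dots> = t * (\<nu>1 \<phi>1 + \<nu>2 (\<lambda>x. \<phi> x - \<phi>1 x))"
      using \<open>t > 0\<close> SMp_scale[OF SMp(1) that, of t] SMp_scale[OF SMp(2) C0_diff[OF \<open>\<phi> \<in> C0 X\<close> that], of t]
      by (simp add: distrib_left)
    finally show ?thesis
      using \<open>t > 0\<close> by (simp add: field_simps)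
  qed
  then have "inf_conv X \<nu>1 \<nu>2 (\<lambda>x. t * \<phi> x) / t \<le> inf_conv X \<nu>1 \<nu>2 \<phi>"
    by (rule le_inf_conv)
  then show "inf_conv X \<nu>1 \<nu>2 (\<lambda>x. t * \<phi> x) \<le> t * inf_conv X \<nu>1 \<nu>2 \<phi>"
    using \<open>t > 0\<close> by (simp add: field_simps)
next
  fix \<phi> assume "\<phi> \<in> C0 X"
  then show "\<bar>inf_conv X \<nu>1 \<nu>2 \<phi>\<bar> \<le> (\<mu> (const_on X 1) + \<nu>1 (const_on X 1)) * supnorm X \<phi>"
    using sm_le_inf_conv[OF minorant] inf_conv_le_left
    by (intro abs_le_between_SMp[OF minorant(1) SMp(1)]) (auto simp: sm_le_def)
next
  fix \<phi> \<phi>' assume "\<phi> \<in> C0 X" "\<phi>' \<in> C0 X" "\<forall>x\<in>X. \<phi> x \<le> \<phi>' x"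
  then have "inf_conv X \<nu>1 \<nu>2 \<phi> \<le> \<nu>1 \<phi>1 + \<nu>2 (\<lambda>x. \<phi>' x - \<phi>1 x)" if "\<phi>1 \<in> C0 X" for \<phi>1
    using inf_conv_le[OF _ that] SMp_mono[OF SMp(2) C0_diff C0_diff, of \<phi> \<phi>1 \<phi>' \<phi>1] that
    by fastforce
  then show "inf_conv X \<nu>1 \<nu>2 \<phi> \<le> inf_conv X \<nu>1 \<nu>2 \<phi>'"
    by (rule le_inf_conv)
qed

end

lemma INF_apply_le:
  assumes "\<nu> \<in> F" "\<phi> \<in> C0 X" "\<And>\<nu>. \<nu> \<in> F \<Longrightarrow> sm_le X \<mu> \<nu>"
  shows "(INF \<nu>\<in>F. \<nu> \<phi>) \<le> \<nu> \<phi>"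
  using assms unfolding sm_le_def by (intro cINF_lower[OF bdd_belowI2[where m = "\<mu> \<phi>"]]) auto

context
  fixes F and \<mu> :: "('a \<Rightarrow> real) \<Rightarrow> real"
  assumes F: "F \<subseteq> SMp X" "F \<noteq> {}"
    and minorant: "\<mu> \<in> SMp X" "\<And>\<nu>. \<nu> \<in> F \<Longrightarrow> sm_le X \<mu> \<nu>"
    and directed: "\<And>\<nu>1 \<nu>2. \<nu>1 \<in> F \<Longrightarrow> \<nu>2 \<in> F \<Longrightarrow> \<exists>\<nu>\<in>F. sm_le X \<nu> \<nu>1 \<and> sm_le X \<nu> \<nu>2"
begin

lemma INF_directed_add_le:
  assumes \<phi>: "\<phi> \<in> C0 X" "\<phi>' \<in> C0 X"
  shows "(INF \<nu>\<in>F. \<nu> (\<lambda>x. \<phi> x + \<phi>' x)) \<le> (INF \<nu>\<in>F. \<nu> \<phi>) + (INF \<nu>\<in>F. \<nu> \<phi>')"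
proof -
  have "(INF \<nu>\<in>F. \<nu> (\<lambda>x. \<phi> x + \<phi>' x)) \<le> \<nu>1 \<phi> + \<nu>2 \<phi>'" if \<nu>12: "\<nu>1 \<in> F" "\<nu>2 \<in> F" for \<nu>1 \<nu>2
  proof -
    obtain \<nu> where \<nu>: "\<nu> \<in> F" "sm_le X \<nu> \<nu>1" "sm_le X \<nu> \<nu>2"
      using directed[OF \<nu>12] by blast
    have "(INF \<nu>\<in>F. \<nu> (\<lambda>x. \<phi> x + \<phi>' x)) \<le> \<nu> \<phi> + \<nu> \<phi>'"
      using INF_apply_le[OF \<nu>(1) C0_add[OF \<phi>] minorant(2)] SMp_add_le[OF _ \<phi>] \<nu>(1) F(1) by fastforce
    also have "\<dots> \<le> \<nu>1 \<phi> + \<nu>2 \<phi>'"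
      using \<nu> \<phi> unfolding sm_le_def by (intro add_mono) blast+
    finally show ?thesis .
  qed
  then have "(INF \<nu>\<in>F. \<nu> (\<lambda>x. \<phi> x + \<phi>' x)) - \<nu>2 \<phi>' \<le> (INF \<nu>\<in>F. \<nu> \<phi>)" if "\<nu>2 \<in> F" for \<nu>2
    using that by (intro cINF_greatest[OF F(2)]) (simp add: algebra_simps)
  then have "(INF \<nu>\<in>F. \<nu> (\<lambda>x. \<phi> x + \<phi>' x)) - (INF \<nu>\<in>F. \<nu> \<phi>) \<le> (INF \<nu>\<in>F. \<nu> \<phi>')"
    by (intro cINF_greatest[OF F(2)]) (simp add: algebra_simps)
  then show ?thesis
    by simp
qed

lemma SMp_Inf_directed: "(\<lambda>\<phi>. INF \<nu>\<in>F. \<nu> \<phi>) \<in> SMp X"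
proof -
  note INF_le = INF_apply_le[OF _ _ minorant(2)]
  obtain \<nu>0 where "\<nu>0 \<in> F"
    using F(2) by blast
  show ?thesis
  proof (rule SMp_intro[where C = "\<mu> (const_on X 1) + \<nu>0 (const_on X 1)", OF INF_directed_add_le])
    fix \<phi> and t :: real assume "\<phi> \<in> C0 X" "t > 0"
    then have "(INF \<nu>\<in>F. \<nu> (\<lambda>x. t * \<phi> x)) / t \<le> \<nu> \<phi>" if "\<nu> \<in> F" for \<nu>
      using INF_le[OF that C0_scale[of \<phi> X t]] SMp_scale[of \<nu> X \<phi> t] F(1) that
      by (simp add: pos_divide_le_eq mult.commute subset_iff)
    then have "(INF \<nu>\<in>F. \<nu> (\<lambda>x. t * \<phi> x)) / t \<le> (INF \<nu>\<in>F. \<nu> \<phi>)"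
      by (rule cINF_greatest[OF F(2)])
    then show "(INF \<nu>\<in>F. \<nu> (\<lambda>x. t * \<phi> x)) \<le> t * (INF \<nu>\<in>F. \<nu> \<phi>)"
      using \<open>t > 0\<close> by (simp add: field_simps)
  next
    fix \<phi> assume "\<phi> \<in> C0 X"
    have "\<mu> \<phi> \<le> (INF \<nu>\<in>F. \<nu> \<phi>)"
      using minorant(2) \<open>\<phi> \<in> C0 X\<close> unfolding sm_le_def by (intro cINF_greatest[OF F(2)]) blast
    moreover have "(INF \<nu>\<in>F. \<nu> \<phi>) \<le> \<nu>0 \<phi>"
      by (rule INF_le[OF \<open>\<nu>0 \<in> F\<close> \<open>\<phi> \<in> C0 X\<close>])
    ultimately show "\<bar>INF \<nu>\<in>F. \<nu> \<phi>\<bar> \<le> (\<mu> (const_on X 1) + \<nu>0 (const_on X 1)) * supnorm X \<phi>"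
      by (intro abs_le_between_SMp[OF minorant(1) subsetD[OF F(1) \<open>\<nu>0 \<in> F\<close>] \<open>\<phi> \<in> C0 X\<close>])
  next
    fix \<phi> \<phi>' assume \<phi>: "\<phi> \<in> C0 X" "\<phi>' \<in> C0 X" "\<forall>x\<in>X. \<phi> x \<le> \<phi>' x"
    have "(INF \<nu>\<in>F. \<nu> \<phi>) \<le> \<nu> \<phi>'" if "\<nu> \<in> F" for \<nu>
    proof -
      have "(INF \<nu>\<in>F. \<nu> \<phi>) \<le> \<nu> \<phi>"
        by (rule INF_le[OF that \<phi>(1)])
      also have "\<dots> \<le> \<nu> \<phi>'"
        using SMp_mono[of \<nu> X \<phi> \<phi>'] F(1) that \<phi> by blast
      finally show ?thesis .
    qed
    then show "(INF \<nu>\<in>F. \<nu> \<phi>) \<le> (INF \<nu>\<in>F. \<nu> \<phi>')"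
      by (rule cINF_greatest[OF F(2)])
  qed
qed

end

end

definition majorants :: "'a::metric_space set \<Rightarrow> 'a set \<Rightarrow> ('a \<Rightarrow> 'a) \<Rightarrow> ('a \<Rightarrow> real)
    \<Rightarrow> ('a \<Rightarrow> real) set" where
  "majorants X U f \<phi> = {\<psi> \<in> C0 X. \<forall>y\<in>U. \<phi> (f y) \<le> \<psi> y}"

locale open_dense_system = nonempty_compact +
  fixes U :: "'a::metric_space set" and f :: "'a \<Rightarrow> 'a"
  assumes open_dense: "open_dense_map X U f"
begin

abbreviation push :: "(('a \<Rightarrow> real) \<Rightarrow> real) \<Rightarrow> ('a \<Rightarrow> real) \<Rightarrow> real" where
  "push \<equiv> pushforward X U f"

abbreviation maj :: "('a \<Rightarrow> real) \<Rightarrow> ('a \<Rightarrow> real) set" where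
  "maj \<equiv> majorants X U f"

lemma U_subset: "U \<subseteq> X" and X_subset_closure: "X \<subseteq> closure U" and f_into: "y \<in> U \<Longrightarrow> f y \<in> X"
  using open_dense unfolding open_dense_map_def by auto

lemma at_within_U_nontrivial: "x \<in> X \<Longrightarrow> x \<notin> U \<Longrightarrow> at x within U \<noteq> bot"
  using X_subset_closure unfolding closure_def by (auto simp: trivial_limit_within)

lemma ge_on_X_if_ge_on_U:
  assumes "continuous_on X \<psi>" "\<forall>y\<in>U. a \<le> \<psi> y" "x \<in> X"
  shows "a \<le> (\<psi> x :: real)"
proof (cases "x \<in> U")
  case False
  have "(\<psi> \<longlongrightarrow> \<psi> x) (at x within X)"
    using assms(1,3) unfolding continuous_on_def by blast
  then have "(\<psi> \<longlongrightarrow> \<psi> x) (at x within U)"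
    using U_subset by (rule tendsto_within_subset)
  moreover have "eventually (\<lambda>y. a \<le> \<psi> y) (at x within U)"
    using assms(2) by (auto simp: eventually_at_filter)
  ultimately show ?thesis
    using at_within_U_nontrivial[OF assms(3) False] by (rule tendsto_lowerbound)
qed (use assms in auto)

lemma ext_E_le:
  assumes "\<psi> \<in> C0 X" "x \<in> X" "\<And>y. y \<in> U \<Longrightarrow> g y \<le> \<psi> y" "\<And>y. y \<in> U \<Longrightarrow> b \<le> g y"
  shows "ext_E X U g x \<le> \<psi> x"
proof (cases "x \<in> U")
  case False
  note nontrivial = at_within_U_nontrivial[OF assms(2) False]
  define L where "L = Limsup (at x within U) (\<lambda>y. ereal (g y))"
  have "ereal b \<le> L"
    unfolding L_def using assms(4) by (intro le_Limsup[OF nontrivial]) (simp add: eventually_at_filter)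
  have "(\<psi> \<longlongrightarrow> \<psi> x) (at x within X)"
    using assms(1,2) unfolding C0_def continuous_on_def by blast
  then have "(\<psi> \<longlongrightarrow> \<psi> x) (at x within U)"
    using U_subset by (rule tendsto_within_subset)
  then have "Limsup (at x within U) (\<lambda>y. ereal (\<psi> y)) = ereal (\<psi> x)"
    by (intro lim_imp_Limsup[OF nontrivial]) simp
  moreover have "L \<le> Limsup (at x within U) (\<lambda>y. ereal (\<psi> y))"
    unfolding L_def using assms(3) by (intro Limsup_mono) (simp add: eventually_at_filter)
  ultimately have "L \<le> ereal (\<psi> x)"
    by simp
  with \<open>ereal b \<le> L\<close> show ?thesis
    using False assms(2) by (cases L) (auto simp: ext_E_def L_def)
qed (use assms in \<open>auto simp: ext_E_def\<close>)

lemma pullback_le_iff: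
  assumes "\<phi> \<in> C0 X" "\<psi> \<in> C0 X"
  shows "(\<forall>x\<in>X. pullback X U f \<phi> x \<le> \<psi> x) \<longleftrightarrow> (\<forall>y\<in>U. \<phi> (f y) \<le> \<psi> y)"
proof
  have "pullback X U f \<phi> y = \<phi> (f y)" if "y \<in> U" for y
    using that by (simp add: pullback_def ext_E_def)
  then show "\<forall>y\<in>U. \<phi> (f y) \<le> \<psi> y" if "\<forall>x\<in>X. pullback X U f \<phi> x \<le> \<psi> x"
    using that U_subset by (metis subsetD)
next
  assume le: "\<forall>y\<in>U. \<phi> (f y) \<le> \<psi> y"
  have lower: "- supnorm X \<phi> \<le> \<phi> (f y)" if "y \<in> U" for y
    using abs_le_supnorm[OF assms(1) f_into[OF that]] by linarith
  show "\<forall>x\<in>X. pullback X U f \<phi> x \<le> \<psi> x"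
  proof
    fix x assume "x \<in> X"
    show "pullback X U f \<phi> x \<le> \<psi> x"
      unfolding pullback_def using le by (intro ext_E_le[OF assms(2) \<open>x \<in> X\<close> _ lower]) auto
  qed
qed

lemma pushforward_eq_Inf:
  assumes "\<phi> \<in> C0 X"
  shows "push \<nu> \<phi> = Inf (\<nu> ` maj \<phi>)"
proof -
  have "{\<nu> \<psi> |\<psi>. \<psi> \<in> C0 X \<and> (\<forall>x\<in>X. pullback X U f \<phi> x \<le> \<psi> x)} = \<nu> ` maj \<phi>"
    using pullback_le_iff[OF assms] unfolding majorants_def by auto
  then show ?thesis
    unfolding pushforward_def by simp
qed

lemma majorants_C0: "\<psi> \<in> maj \<phi> \<Longrightarrow> \<psi> \<in> C0 X"
  unfolding majorants_def by auto

lemma const_on_majorant: "\<phi> \<in> C0 X \<Longrightarrow> \<forall>x\<in>X. \<phi> x \<le> c \<Longrightarrow> const_on X c \<in> maj \<phi>"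
  unfolding majorants_def using C0_const_on f_into U_subset by (auto simp: const_on_def)

lemma majorant_lower_bound:
  assumes "\<psi> \<in> maj \<phi>" "\<forall>x\<in>X. a \<le> \<phi> x" "x \<in> X"
  shows "a \<le> \<psi> x"
proof (rule ge_on_X_if_ge_on_U[OF _ _ assms(3)])
  show "continuous_on X \<psi>"
    using assms(1) unfolding majorants_def C0_def by blast
  show "\<forall>y\<in>U. a \<le> \<psi> y"
  proof
    fix y assume "y \<in> U"
    then have "a \<le> \<phi> (f y)"
      using assms(2) f_into by blast
    also have "\<phi> (f y) \<le> \<psi> y"
      using assms(1) \<open>y \<in> U\<close> unfolding majorants_def by blast
    finally show "a \<le> \<psi> y" .
  qed
qed

lemma majorants_add: "\<psi>1 \<in> maj \<phi>1 \<Longrightarrow> \<psi>2 \<in> maj \<phi>2 \<Longrightarrow> (\<lambda>x. \<psi>1 x + \<psi>2 x) \<in> maj (\<lambda>x. \<phi>1 x + \<phi>2 x)"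
  unfolding majorants_def by (auto intro: C0_add add_mono)

lemma majorants_scale: "\<psi> \<in> maj \<phi> \<Longrightarrow> c \<ge> 0 \<Longrightarrow> (\<lambda>x. c * \<psi> x) \<in> maj (\<lambda>x. c * \<phi> x)"
  unfolding majorants_def by (auto intro: C0_scale mult_left_mono)

lemma majorants_antimono:
  assumes "\<forall>x\<in>X. \<phi>1 x \<le> \<phi>2 x"
  shows "maj \<phi>2 \<subseteq> maj \<phi>1"
proof
  fix \<psi> assume \<psi>: "\<psi> \<in> maj \<phi>2"
  have "\<phi>1 (f y) \<le> \<psi> y" if "y \<in> U" for y
  proof -
    have "\<phi>1 (f y) \<le> \<phi>2 (f y)"
      using assms f_into[OF that] by blast
    also have "\<phi>2 (f y) \<le> \<psi> y"
      using \<psi> that unfolding majorants_def by blast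
    finally show ?thesis .
  qed
  then show "\<psi> \<in> maj \<phi>1"
    using \<psi> unfolding majorants_def by blast
qed

lemma SMp_majorant_lower_bound:
  assumes "\<nu> \<in> SMp X" "\<phi> \<in> C0 X" "\<psi> \<in> maj \<phi>"
  shows "- supnorm X \<phi> * \<nu> (const_on X 1) \<le> \<nu> \<psi>"
proof -
  have "\<forall>x\<in>X. - supnorm X \<phi> \<le> \<phi> x"
    using abs_le_supnorm[OF assms(2)] by (force simp: abs_le_iff)
  then show ?thesis
    using majorant_lower_bound[OF assms(3)]
    by (intro SMp_ge_const_on[OF assms(1) majorants_C0[OF assms(3)] supnorm_nonneg[OF assms(2)]]) blast
qed

lemma pushforward_le:
  assumes "\<nu> \<in> SMp X" "\<phi> \<in> C0 X" "\<psi> \<in> maj \<phi>"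
  shows "push \<nu> \<phi> \<le> \<nu> \<psi>"
proof -
  have "- supnorm X \<phi> * \<nu> (const_on X 1) \<le> \<nu> \<psi>'" if "\<psi>' \<in> maj \<phi>" for \<psi>'
    by (rule SMp_majorant_lower_bound[OF assms(1,2) that])
  then show ?thesis
    unfolding pushforward_eq_Inf[OF assms(2)] using assms(3)
    by (intro cInf_lower bdd_belowI2[where m = "- supnorm X \<phi> * \<nu> (const_on X 1)"]) auto
qed

lemma le_pushforward:
  assumes "\<phi> \<in> C0 X" "\<And>\<psi>. \<psi> \<in> maj \<phi> \<Longrightarrow> a \<le> \<nu> \<psi>"
  shows "a \<le> push \<nu> \<phi>"
proof -
  have "const_on X (supnorm X \<phi>) \<in> maj \<phi>"
    using abs_le_supnorm[OF assms(1)] by (intro const_on_majorant[OF assms(1)]) (force simp: abs_le_iff)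
  then show ?thesis
    unfolding pushforward_eq_Inf[OF assms(1)] using assms(2) by (intro cInf_greatest) auto
qed

lemma pushforward_add_le:
  assumes "\<nu> \<in> SMp X" "\<phi>1 \<in> C0 X" "\<phi>2 \<in> C0 X"
  shows "push \<nu> (\<lambda>x. \<phi>1 x + \<phi>2 x) \<le> push \<nu> \<phi>1 + push \<nu> \<phi>2"
proof -
  have "push \<nu> (\<lambda>x. \<phi>1 x + \<phi>2 x) \<le> \<nu> \<psi>1 + \<nu> \<psi>2" if "\<psi>1 \<in> maj \<phi>1" "\<psi>2 \<in> maj \<phi>2" for \<psi>1 \<psi>2
    using pushforward_le[OF assms(1) C0_add[OF assms(2,3)] majorants_add[OF that]]
      SMp_add_le[OF assms(1) majorants_C0[OF that(1)] majorants_C0[OF that(2)]] by linarith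
  then have "push \<nu> (\<lambda>x. \<phi>1 x + \<phi>2 x) - \<nu> \<psi>2 \<le> push \<nu> \<phi>1" if "\<psi>2 \<in> maj \<phi>2" for \<psi>2
    using that by (intro le_pushforward[OF assms(2)]) (simp add: algebra_simps)
  then have "push \<nu> (\<lambda>x. \<phi>1 x + \<phi>2 x) - push \<nu> \<phi>1 \<le> push \<nu> \<phi>2"
    by (intro le_pushforward[OF assms(3)]) (simp add: algebra_simps)
  then show ?thesis
    by simp
qed

lemma pushforward_scale_le:
  assumes "\<nu> \<in> SMp X" "\<phi> \<in> C0 X" "t > 0"
  shows "push \<nu> (\<lambda>x. t * \<phi> x) \<le> t * push \<nu> \<phi>"
proof -
  have "push \<nu> (\<lambda>x. t * \<phi> x) / t \<le> \<nu> \<psi>" if "\<psi> \<in> maj \<phi>" for \<psi>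
    using pushforward_le[OF assms(1) C0_scale[OF assms(2)] majorants_scale[OF that, of t]]
      SMp_scale[OF assms(1) majorants_C0[OF that], of t] assms(3)
    by (simp add: pos_divide_le_eq mult.commute)
  then have "push \<nu> (\<lambda>x. t * \<phi> x) / t \<le> push \<nu> \<phi>"
    by (rule le_pushforward[OF assms(2)])
  then show ?thesis
    using assms(3) by (simp add: pos_divide_le_eq mult.commute)
qed

lemma pushforward_abs_le:
  assumes "\<nu> \<in> SMp X" "\<phi> \<in> C0 X"
  shows "\<bar>push \<nu> \<phi>\<bar> \<le> \<nu> (const_on X 1) * supnorm X \<phi>"
proof -
  have "push \<nu> \<phi> \<le> \<nu> (const_on X (supnorm X \<phi>))"
    using abs_le_supnorm[OF assms(2)]
    by (intro pushforward_le[OF assms] const_on_majorant[OF assms(2)]) (force simp: abs_le_iff)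
  also have "\<dots> = supnorm X \<phi> * \<nu> (const_on X 1)"
    by (rule SMp_const_on[OF assms(1) supnorm_nonneg[OF assms(2)]])
  finally have "push \<nu> \<phi> \<le> supnorm X \<phi> * \<nu> (const_on X 1)" .
  moreover have "- supnorm X \<phi> * \<nu> (const_on X 1) \<le> push \<nu> \<phi>"
    using SMp_majorant_lower_bound[OF assms] by (rule le_pushforward[OF assms(2)])
  ultimately show ?thesis
    by (simp add: abs_le_iff mult.commute)
qed

lemma pushforward_mono_arg:
  assumes "\<nu> \<in> SMp X" "\<phi>1 \<in> C0 X" "\<phi>2 \<in> C0 X" "\<forall>x\<in>X. \<phi>1 x \<le> \<phi>2 x"
  shows "push \<nu> \<phi>1 \<le> push \<nu> \<phi>2"
  using pushforward_le[OF assms(1,2)] majorants_antimono[OF assms(4)]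
  by (intro le_pushforward[OF assms(3)]) blast

lemma pushforward_SMp: "\<nu> \<in> SMp X \<Longrightarrow> push \<nu> \<in> SMp X"
  by (rule SMp_intro[where C = "\<nu> (const_on X 1)"])
    (simp_all add: pushforward_add_le pushforward_scale_le pushforward_abs_le pushforward_mono_arg)

lemma pushforward_mono:
  assumes "\<nu>1 \<in> SMp X" "sm_le X \<nu>1 \<nu>2"
  shows "sm_le X (push \<nu>1) (push \<nu>2)"
  unfolding sm_le_def
proof
  fix \<phi> assume "\<phi> \<in> C0 X"
  have "push \<nu>1 \<phi> \<le> \<nu>2 \<psi>" if "\<psi> \<in> maj \<phi>" for \<psi>
    using pushforward_le[OF assms(1) \<open>\<phi> \<in> C0 X\<close> that] assms(2) majorants_C0[OF that]
    unfolding sm_le_def by fastforce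
  then show "push \<nu>1 \<phi> \<le> push \<nu>2 \<phi>"
    by (rule le_pushforward[OF \<open>\<phi> \<in> C0 X\<close>])
qed

lemma pushforward_const_on_one_le: "\<nu> \<in> SMp X \<Longrightarrow> push \<nu> (const_on X 1) \<le> \<nu> (const_on X 1)"
  by (intro pushforward_le C0_const_on const_on_majorant) (auto simp: const_on_def)

lemma iterates_SMp: "\<nu> \<in> SMp X \<Longrightarrow> (push ^^ n) \<nu> \<in> SMp X"
  by (induction n) (auto intro: pushforward_SMp)

lemma iterates_abs_le:
  assumes "\<nu> \<in> SMp X" "\<phi> \<in> C0 X"
  shows "\<bar>(push ^^ n) \<nu> \<phi>\<bar> \<le> \<nu> (const_on X 1) * supnorm X \<phi>"
proof -
  have "(push ^^ n) \<nu> (const_on X 1) \<le> \<nu> (const_on X 1)"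
  proof (induction n)
    case (Suc n)
    then show ?case
      using pushforward_const_on_one_le[OF iterates_SMp[OF assms(1)], of n] by simp
  qed simp
  then show ?thesis
    using SMp_abs_le[OF iterates_SMp[OF assms(1)] assms(2), of n] supnorm_nonneg[OF assms(2)]
    by (meson mult_right_mono order_trans)
qed

lemma sm_le_pushforward_iff:
  assumes "\<nu> \<in> SMp X"
  shows "sm_le X \<nu> (push \<nu>) \<longleftrightarrow> (\<forall>\<phi>\<in>C0 X. \<forall>\<psi>\<in>maj \<phi>. \<nu> \<phi> \<le> \<nu> \<psi>)"
  unfolding sm_le_def
  using pushforward_le[OF assms] le_pushforward by (meson order_trans)

lemma pushforward_sup_submeasure_le:
  assumes "c \<ge> 0"
  shows "sm_le X (push (sup_submeasure X c)) (sup_submeasure X c)"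
  unfolding sm_le_def
proof
  fix \<phi> assume "\<phi> \<in> C0 X"
  define s where "s = max 0 (SUP x\<in>X. \<phi> x)"
  have "const_on X s \<in> maj \<phi>"
    unfolding s_def using le_SUP_C0[OF \<open>\<phi> \<in> C0 X\<close>]
    by (intro const_on_majorant[OF \<open>\<phi> \<in> C0 X\<close>]) (auto intro: max.coboundedI2)
  then have "push (sup_submeasure X c) \<phi> \<le> sup_submeasure X c (const_on X s)"
    by (rule pushforward_le[OF sup_submeasure_SMp[OF assms] \<open>\<phi> \<in> C0 X\<close>])
  also have "(SUP x\<in>X. const_on X s x) = s"
    using nonempty by (simp add: const_on_def)
  then have "sup_submeasure X c (const_on X s) = sup_submeasure X c \<phi>"
    by (simp add: sup_submeasure_def s_def)
  finally show "push (sup_submeasure X c) \<phi> \<le> sup_submeasure X c \<phi>" .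
qed

lemma cesaro_sum_le:
  assumes "\<mu>0 \<in> SMp X" "\<phi> \<in> C0 X" "\<psi> \<in> maj \<phi>"
  shows "(\<Sum>j=0..n. (push ^^ j) \<mu>0 \<phi>)
    \<le> (\<Sum>j=0..n. (push ^^ j) \<mu>0 \<psi>) + 2 * (\<mu>0 (const_on X 1) * supnorm X \<phi>)"
proof -
  define g where "g j = (push ^^ j) \<mu>0 \<phi>" for j
  have "(\<Sum>j=0..n. g (Suc j)) = (\<Sum>j=0..n. g j) + g (Suc n) - g 0"
    using sum.atLeast0_atMost_Suc_shift[of g n] by simp
  moreover have "\<bar>g j\<bar> \<le> \<mu>0 (const_on X 1) * supnorm X \<phi>" for j
    unfolding g_def by (rule iterates_abs_le[OF assms(1,2)])
  moreover have "(\<Sum>j=0..n. g (Suc j)) \<le> (\<Sum>j=0..n. (push ^^ j) \<mu>0 \<psi>)"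
    unfolding g_def using pushforward_le[OF iterates_SMp[OF assms(1)] assms(2,3)]
    by (intro sum_mono) simp
  ultimately show ?thesis
    unfolding g_def by (smt (verit, best))
qed

lemma cesaro_cluster_point_subinvariant:
  assumes "\<mu>0 \<in> SMp X"
    and "weak_cluster_point X (\<lambda>n \<phi>. (1 / real n) * (\<Sum>j=0..n. (push ^^ j) \<mu>0 \<phi>)) \<mu>"
  shows "sm_le X \<mu> (push \<mu>)"
  unfolding sm_le_def
proof
  fix \<phi> assume \<phi>: "\<phi> \<in> C0 X"
  define A where "A n \<xi> = (1 / real n) * (\<Sum>j=0..n. (push ^^ j) \<mu>0 \<xi>)" for n \<xi>
  define K where "K = 2 * (\<mu>0 (const_on X 1) * supnorm X \<phi>)"
  obtain r where r: "strict_mono r" and lim: "\<And>\<xi>. \<xi> \<in> C0 X \<Longrightarrow> (\<lambda>k. A (r k) \<xi>) \<longlonglongrightarrow> \<mu> \<xi>"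
    using assms(2) unfolding weak_cluster_point_def weak_conv_def A_def by (auto simp: o_def)
  have "(\<lambda>k. 1 / real (r k)) \<longlonglongrightarrow> 0"
    using LIMSEQ_subseq_LIMSEQ[OF lim_1_over_n r] by (simp add: o_def)
  then have lim_shifted: "(\<lambda>k. A (r k) \<phi> - K * (1 / real (r k))) \<longlonglongrightarrow> \<mu> \<phi>"
    using tendsto_diff[OF lim[OF \<phi>] tendsto_mult_left] by fastforce
  show "\<mu> \<phi> \<le> push \<mu> \<phi>"
  proof (rule le_pushforward[OF \<phi>])
    fix \<psi> assume \<psi>: "\<psi> \<in> maj \<phi>"
    have "A (r k) \<phi> - K * (1 / real (r k)) \<le> A (r k) \<psi>" for k
      using mult_left_mono[OF cesaro_sum_le[OF assms(1) \<phi> \<psi>, of "r k"], of "1 / real (r k)"]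
      unfolding A_def K_def by (simp add: algebra_simps)
    then show "\<mu> \<phi> \<le> \<mu> \<psi>"
      using lim_shifted lim[OF majorants_C0[OF \<psi>]] by (intro LIMSEQ_le) auto
  qed
qed

lemma iterates_antimono:
  assumes "\<rho> \<in> SMp X" "sm_le X (push \<rho>) \<rho>"
  shows "sm_le X ((push ^^ Suc n) \<rho>) ((push ^^ n) \<rho>)"
proof (induction n)
  case (Suc n)
  then show ?case
    using pushforward_mono[OF iterates_SMp[OF assms(1), of "Suc n"] Suc.IH] by simp
qed (use assms(2) in simp)

lemma subinvariant_le_iterates:
  assumes "\<nu> \<in> SMp X" "sm_le X \<nu> (push \<nu>)" "sm_le X \<nu> \<rho>"
  shows "sm_le X \<nu> ((push ^^ n) \<rho>)"
proof (induction n)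
  case (Suc n)
  then show ?case
    using sm_le_trans[OF assms(2) pushforward_mono[OF assms(1) Suc]] by simp
qed (use assms(3) in simp)

lemma iterates_limit:
  assumes "\<rho> \<in> SMp X" "sm_le X (push \<rho>) \<rho>"
  obtains \<mu> where "weak_conv X (\<lambda>n. (push ^^ n) \<rho>) \<mu>" "\<And>n. sm_le X \<mu> ((push ^^ n) \<rho>)"
proof -
  define \<mu> where "\<mu> \<phi> = lim (\<lambda>n. (push ^^ n) \<rho> \<phi>)" for \<phi>
  have "(\<lambda>n. (push ^^ n) \<rho> \<phi>) \<longlonglongrightarrow> \<mu> \<phi> \<and> (\<forall>n. \<mu> \<phi> \<le> (push ^^ n) \<rho> \<phi>)" if "\<phi> \<in> C0 X" for \<phi>
  proof -
    have "decseq (\<lambda>n. (push ^^ n) \<rho> \<phi>)"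
      using iterates_antimono[OF assms] that unfolding sm_le_def by (intro decseq_SucI) blast
    moreover have "\<forall>n. - (\<rho> (const_on X 1) * supnorm X \<phi>) \<le> (push ^^ n) \<rho> \<phi>"
      using iterates_abs_le[OF assms(1) that] by (meson abs_le_D2 minus_le_iff)
    ultimately obtain L where "(\<lambda>n. (push ^^ n) \<rho> \<phi>) \<longlonglongrightarrow> L" "\<forall>n. L \<le> (push ^^ n) \<rho> \<phi>"
      by (rule decseq_convergent)
    then show ?thesis
      unfolding \<mu>_def by (simp add: limI)
  qed
  then show ?thesis
    using that iterates_abs_le[OF assms(1)] unfolding weak_conv_def sm_le_def by blast
qed

lemma decreasing_iterates_converge:
  assumes \<rho>: "\<rho> \<in> SMp X" "sm_le X (push \<rho>) \<rho>"
  shows "\<exists>\<mu>\<in>SMp X. weak_conv X (\<lambda>n. (push ^^ n) \<rho>) \<mu> \<and> sm_le X \<mu> \<rho> \<and> sm_eq X (push \<mu>) \<mu>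
    \<and> (\<forall>\<nu>\<in>SMp X. sm_le X \<nu> (push \<nu>) \<and> sm_le X \<nu> \<rho> \<longrightarrow> sm_le X \<nu> \<mu>)"
proof -
  obtain \<mu> where wc: "weak_conv X (\<lambda>n. (push ^^ n) \<rho>) \<mu>"
    and below: "\<And>n. sm_le X \<mu> ((push ^^ n) \<rho>)"
    using iterates_limit[OF \<rho>] by blast
  have lim: "(\<lambda>n. (push ^^ Suc n) \<rho> \<phi>) \<longlonglongrightarrow> \<mu> \<phi>" "(\<lambda>n. (push ^^ n) \<rho> \<phi>) \<longlonglongrightarrow> \<mu> \<phi>"
    if "\<phi> \<in> C0 X" for \<phi>
    using wc that LIMSEQ_Suc unfolding weak_conv_def by blast+
  have \<mu>: "\<mu> \<in> SMp X"
    by (rule SMp_weak_limit[OF iterates_SMp[OF \<rho>(1)] wc])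
  have "push \<mu> \<phi> \<le> \<mu> \<phi>" if "\<phi> \<in> C0 X" for \<phi>
    using pushforward_mono[OF \<mu> below] that unfolding sm_le_def
    by (intro LIMSEQ_le_const[OF lim(1)[OF that]]) auto
  moreover have "\<mu> \<phi> \<le> \<mu> \<psi>" if "\<phi> \<in> C0 X" "\<psi> \<in> maj \<phi>" for \<phi> \<psi>
    using pushforward_le[OF iterates_SMp[OF \<rho>(1)] that]
    by (intro LIMSEQ_le[OF lim(1)[OF that(1)] lim(2)[OF majorants_C0[OF that(2)]]]) auto
  then have "sm_le X \<mu> (push \<mu>)"
    using sm_le_pushforward_iff[OF \<mu>] by blast
  ultimately have "sm_eq X (push \<mu>) \<mu>"
    unfolding sm_eq_def sm_le_def by (simp add: antisym)
  moreover have "sm_le X \<nu> \<mu>" if \<nu>: "\<nu> \<in> SMp X" "sm_le X \<nu> (push \<nu>)" "sm_le X \<nu> \<rho>" for \<nu>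
    unfolding sm_le_def
  proof
    fix \<phi> assume "\<phi> \<in> C0 X"
    then show "\<nu> \<phi> \<le> \<mu> \<phi>"
      using subinvariant_le_iterates[OF \<nu>] unfolding sm_le_def
      by (intro LIMSEQ_le_const[OF lim(2)]) auto
  qed
  ultimately show ?thesis
    using \<mu> wc below[of 0] by auto
qed

lemma fixed_point_between:
  assumes "\<mu>0 \<in> SMp X" "sm_le X \<mu>0 (push \<mu>0)" "\<rho> \<in> SMp X" "sm_le X (push \<rho>) \<rho>" "sm_le X \<mu>0 \<rho>"
  shows "\<exists>\<nu>\<in>SMp X. sm_le X \<mu>0 \<nu> \<and> sm_eq X (push \<nu>) \<nu> \<and> sm_le X \<nu> \<rho>"
  using decreasing_iterates_converge[OF assms(3,4)] assms(1,2,5) by blast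

lemma fixed_points_directed:
  assumes \<mu>0: "\<mu>0 \<in> SMp X" "sm_le X \<mu>0 (push \<mu>0)"
    and \<nu>1: "\<nu>1 \<in> SMp X" "sm_le X \<mu>0 \<nu>1" "sm_eq X (push \<nu>1) \<nu>1"
    and \<nu>2: "\<nu>2 \<in> SMp X" "sm_le X \<mu>0 \<nu>2" "sm_eq X (push \<nu>2) \<nu>2"
  shows "\<exists>\<nu>\<in>SMp X. sm_le X \<mu>0 \<nu> \<and> sm_eq X (push \<nu>) \<nu> \<and> sm_le X \<nu> \<nu>1 \<and> sm_le X \<nu> \<nu>2"
proof -
  let ?\<rho> = "inf_conv X \<nu>1 \<nu>2"
  note minorant = \<mu>0(1) \<nu>1(2) \<nu>2(2) \<nu>1(1) \<nu>2(1)
  have \<rho>: "?\<rho> \<in> SMp X"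
    by (rule inf_conv_SMp[OF minorant])
  have "sm_le X (push ?\<rho>) \<nu>1" "sm_le X (push ?\<rho>) \<nu>2"
    using pushforward_mono[OF \<rho> inf_conv_le_left[OF minorant]]
      pushforward_mono[OF \<rho> inf_conv_le_right[OF minorant]] \<nu>1(3) \<nu>2(3)
    unfolding sm_le_def sm_eq_def by auto
  then have "sm_le X (push ?\<rho>) ?\<rho>"
    by (rule sm_le_inf_conv[OF pushforward_SMp[OF \<rho>]])
  then show ?thesis
    using fixed_point_between[OF \<mu>0 \<rho> _ sm_le_inf_conv[OF \<mu>0(1) \<nu>1(2) \<nu>2(2)]]
      inf_conv_le_left[OF minorant] inf_conv_le_right[OF minorant]
    by (meson sm_le_trans)
qed

lemma INF_fixed_points_fixed:
  assumes F: "F \<subseteq> SMp X" "F \<noteq> {}" "\<And>\<nu>. \<nu> \<in> F \<Longrightarrow> sm_le X \<mu>0 \<nu>"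
    and fixed: "\<And>\<nu> \<phi>. \<nu> \<in> F \<Longrightarrow> \<phi> \<in> C0 X \<Longrightarrow> push \<nu> \<phi> = \<nu> \<phi>"
    and \<mu>_def: "\<mu> = (\<lambda>\<phi>. INF \<nu>\<in>F. \<nu> \<phi>)" and \<mu>: "\<mu> \<in> SMp X"
  shows "sm_eq X (push \<mu>) \<mu>"
proof -
  have \<mu>_le: "\<mu> \<phi> \<le> \<nu> \<phi>" if "\<nu> \<in> F" "\<phi> \<in> C0 X" for \<nu> \<phi>
    unfolding \<mu>_def by (rule INF_apply_le[OF that F(3)])
  have le_\<mu>: "a \<le> \<mu> \<phi>" if "\<And>\<nu>. \<nu> \<in> F \<Longrightarrow> a \<le> \<nu> \<phi>" for a \<phi>
    unfolding \<mu>_def by (rule cINF_greatest[OF F(2) that])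
  have "push \<mu> \<phi> \<le> \<mu> \<phi>" if "\<phi> \<in> C0 X" for \<phi>
  proof (rule le_\<mu>)
    fix \<nu> assume "\<nu> \<in> F"
    have "sm_le X (push \<mu>) (push \<nu>)"
      using \<mu>_le[OF \<open>\<nu> \<in> F\<close>] by (intro pushforward_mono[OF \<mu>]) (simp add: sm_le_def)
    then show "push \<mu> \<phi> \<le> \<nu> \<phi>"
      using fixed[OF \<open>\<nu> \<in> F\<close> that] that unfolding sm_le_def by auto
  qed
  moreover have "\<mu> \<phi> \<le> \<mu> \<psi>" if "\<phi> \<in> C0 X" "\<psi> \<in> maj \<phi>" for \<phi> \<psi>
  proof (rule le_\<mu>)
    fix \<nu> assume "\<nu> \<in> F"
    have "\<mu> \<phi> \<le> \<nu> \<phi>"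
      by (rule \<mu>_le[OF \<open>\<nu> \<in> F\<close> that(1)])
    also have "\<dots> = push \<nu> \<phi>"
      by (rule fixed[OF \<open>\<nu> \<in> F\<close> that(1), symmetric])
    also have "\<dots> \<le> \<nu> \<psi>"
      by (rule pushforward_le[OF subsetD[OF F(1) \<open>\<nu> \<in> F\<close>] that])
    finally show "\<mu> \<phi> \<le> \<nu> \<psi>" .
  qed
  then have "sm_le X \<mu> (push \<mu>)"
    using sm_le_pushforward_iff[OF \<mu>] by blast
  ultimately show ?thesis
    unfolding sm_eq_def sm_le_def by (simp add: antisym)
qed

lemma least_fixed_point_above:
  assumes \<mu>0: "\<mu>0 \<in> SMp X" "sm_le X \<mu>0 (push \<mu>0)"
  shows "\<exists>\<mu>\<in>SMp X. sm_le X \<mu>0 \<mu> \<and> sm_eq X (push \<mu>) \<mu>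
    \<and> (\<forall>\<nu>\<in>SMp X. sm_le X \<mu>0 \<nu> \<and> sm_eq X (push \<nu>) \<nu> \<longrightarrow> sm_le X \<mu> \<nu>)"
proof -
  define F where "F = {\<nu>\<in>SMp X. sm_le X \<mu>0 \<nu> \<and> sm_eq X (push \<nu>) \<nu>}"
  define \<mu> where "\<mu> = (\<lambda>\<phi>. INF \<nu>\<in>F. \<nu> \<phi>)"
  have F: "F \<subseteq> SMp X" "\<And>\<nu>. \<nu> \<in> F \<Longrightarrow> sm_le X \<mu>0 \<nu>"
    and fixed: "\<And>\<nu> \<phi>. \<nu> \<in> F \<Longrightarrow> \<phi> \<in> C0 X \<Longrightarrow> push \<nu> \<phi> = \<nu> \<phi>"
    unfolding F_def sm_eq_def by auto
  have "F \<noteq> {}"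
    using fixed_point_between[OF \<mu>0 sup_submeasure_SMp pushforward_sup_submeasure_le
        SMp_le_sup_submeasure[OF \<mu>0(1)]] SMp_const_on_one_nonneg[OF \<mu>0(1)]
    unfolding F_def by blast
  moreover have "\<exists>\<nu>\<in>F. sm_le X \<nu> \<nu>1 \<and> sm_le X \<nu> \<nu>2" if "\<nu>1 \<in> F" "\<nu>2 \<in> F" for \<nu>1 \<nu>2
    using fixed_points_directed[OF \<mu>0] that unfolding F_def by blast
  ultimately have "\<mu> \<in> SMp X"
    unfolding \<mu>_def using SMp_Inf_directed[OF F(1) _ \<mu>0(1) F(2)] by blast
  moreover have "sm_le X \<mu>0 \<mu>" "\<And>\<nu>. \<nu> \<in> F \<Longrightarrow> sm_le X \<mu> \<nu>"
    using F \<open>F \<noteq> {}\<close> INF_apply_le[OF _ _ F(2)] unfolding \<mu>_def sm_le_def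
    by (auto intro: cINF_greatest)
  ultimately show ?thesis
    using INF_fixed_points_fixed[OF F(1) \<open>F \<noteq> {}\<close> F(2) fixed \<mu>_def] unfolding F_def by blast
qed

end

theorem theorem1p4:
  fixes X U :: "'a::metric_space set" and f :: "'a \<Rightarrow> 'a"
    and \<mu>0 :: "('a \<Rightarrow> real) \<Rightarrow> real"
  assumes "compact X"
    and "open_dense_map X U f"
    and "\<mu>0 \<in> SMp X"
    and "\<exists>\<phi>\<in>C0 X. \<mu>0 \<phi> \<noteq> 0"
  shows
    "(\<forall>\<mu>. weak_cluster_point X
            (\<lambda>n \<phi>. (1 / real n) * (\<Sum>j=0..n. ((pushforward X U f ^^ j) \<mu>0) \<phi>)) \<mu>
          \<longrightarrow> sm_le X \<mu> (pushforward X U f \<mu>))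
   \<and> (sm_le X (pushforward X U f \<mu>0) \<mu>0 \<longrightarrow>
        (\<exists>\<mu>inf\<in>SMp X. weak_conv X (\<lambda>n. (pushforward X U f ^^ n) \<mu>0) \<mu>inf
           \<and> sm_le X \<mu>inf \<mu>0 \<and> sm_eq X (pushforward X U f \<mu>inf) \<mu>inf
           \<and> (\<forall>\<mu>\<in>SMp X. sm_le X \<mu> \<mu>0 \<and> sm_eq X (pushforward X U f \<mu>) \<mu>
                 \<longrightarrow> sm_le X \<mu> \<mu>inf)))
   \<and> (sm_le X \<mu>0 (pushforward X U f \<mu>0) \<longrightarrow>
        (\<exists>\<mu>\<in>SMp X. sm_le X \<mu>0 \<mu> \<and> sm_eq X (pushforward X U f \<mu>) \<mu>
           \<and> (\<forall>\<nu>\<in>SMp X. sm_le X \<mu>0 \<nu> \<and> sm_eq X (pushforward X U f \<nu>) \<nu>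
                 \<longrightarrow> sm_le X \<mu> \<nu>)))"
proof -
  \<comment> \<open>The hypothesis \<mu>0 \<noteq> 0 only serves to exclude X = {}, where C0 X = {0}.\<close>
  have "X \<noteq> {}"
  proof
    assume "X = {}"
    then have "C0 X = {\<lambda>x. 0}"
      by (auto simp: C0_def)
    then show False
      using assms(4) SMp_zero[OF assms(3)] by simp
  qed
  then interpret open_dense_system X U f
    using assms(1,2) by unfold_locales
  have fixed_imp_subinvariant: "sm_eq X (push \<mu>) \<mu> \<Longrightarrow> sm_le X \<mu> (push \<mu>)" for \<mu>
    by (simp add: sm_eq_def sm_le_def)
  show ?thesis
    using cesaro_cluster_point_subinvariant[OF assms(3)] decreasing_iterates_converge[OF assms(3)]
      least_fixed_point_above[OF assms(3)] fixed_imp_subinvariant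
    by blast
qed

end
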